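(* Let $M \subseteq \mathbb{N}_0$ be a semiideal. If $d$ is a difference of $M$, then there is an element $c \in M$ with $c \neq 0$ and $c$ divisible by $d$, such that $c + nd \in M$ for all $n \in \mathbb{N}_0$.
   Context: $\mathbb{N}_0$ denotes the semiring of natural numbers including $0$ with usual addition and multiplication. A semiideal of $\mathbb{N}_0$ is a nonempty subset $M \subseteq \mathbb{N}_0$ such that $m+m' \in M$ and $rm \in M$ for all $m,m' \in M$, $r \in \mathbb{N}_0$ (so $0 \in M$). For a semiideal $M \neq 0$, an element $d \in \mathbb{N} = \mathbb{N}_0\setminus\{0\}$ is called a difference of $M$ if there exist $a, b \in M$ with $a \neq 0$ and $a + d = b$. *)

theory Defs
  imports Main
begin

definition semiideal :: "nat set \<Rightarrow> bool" where
  "semiideal M \<longleftrightarrow> M \<noteq> {} \<and> (\<forall>m\<in>M. \<forall>m'\<in>M. m + m' \<in> M) \<and> (\<forall>m\<in>M. \<forall>r. r * m \<in> M)"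

definition is_difference :: "nat set \<Rightarrow> nat \<Rightarrow> bool" where
  "is_difference M d \<longleftrightarrow> M \<noteq> {0} \<and> d \<noteq> 0 \<and> (\<exists>a\<in>M. \<exists>b\<in>M. a \<noteq> 0 \<and> a + d = b)"

end

theory Submission
  imports Defs
begin

text \<open>If \<open>a \<noteq> 0\<close> and \<open>a + d\<close> both lie in \<open>M\<close>, write \<open>n = q a + r\<close> with \<open>r < a\<close>; then
  \<open>m a + n d = r (a + d) + (m - r + q d) a\<close>, a combination of elements of \<open>M\<close> with
  nonnegative coefficients as soon as \<open>m \<ge> a - 1\<close>. The choice \<open>c = (a d) a\<close> meets this
  bound and is divisible by \<open>d\<close>.\<close>

lemma semiideal_linear_combination:
  assumes "semiideal M" and "x \<in> M" and "y \<in> M"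
  shows "r * x + s * y \<in> M"
  using assms unfolding semiideal_def by blast

lemma semiideal_mult_add_mult_difference:
  assumes M: "semiideal M" and a: "a \<in> M" "a \<noteq> 0" and b: "a + d \<in> M"
    and m: "a \<le> m + 1"
  shows "m * a + n * d \<in> M"
proof -
  define q r where "q = n div a" and "r = n mod a"
  have n: "n = q * a + r" by (simp add: q_def r_def)
  have "r < a" using a(2) by (simp add: r_def)
  with m have r_le: "r \<le> m + q * d" by linarith
  have "m * a + n * d = r * (a + d) + (m + q * d - r) * a"
  proof -
    have "m * a + n * d = r * d + (r + (m + q * d - r)) * a"
      using r_le by (simp add: n algebra_simps)
    then show ?thesis by (simp add: algebra_simps)
  qed
  then show ?thesis
    using semiideal_linear_combination[OF M b a(1)] by simp
qed

theorem theorem4p2: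
  fixes M :: "nat set" and d :: nat
  assumes "semiideal M" and "is_difference M d"
  shows "\<exists>c\<in>M. c \<noteq> 0 \<and> d dvd c \<and> (\<forall>n::nat. c + n * d \<in> M)"
proof -
  from assms(2) obtain a where a: "a \<in> M" "a \<noteq> 0" "a + d \<in> M" and "d \<noteq> 0"
    unfolding is_difference_def by blast
  have "(a * d) * a \<in> M"
    using semiideal_linear_combination[OF assms(1) a(1) a(1), of "a * d" 0] by simp
  moreover have "(a * d) * a \<noteq> 0" using a(2) \<open>d \<noteq> 0\<close> by simp
  moreover have "(a * d) * a + n * d \<in> M" for n
  proof -
    have "a \<le> a * d + 1" using \<open>d \<noteq> 0\<close> by (simp add: le_SucI)
    then show ?thesis using semiideal_mult_add_mult_difference[OF assms(1) a] by blast
  qed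
  ultimately show ?thesis by (intro bexI[of _ "(a * d) * a"]) auto
qed

end
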